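(* Let $y:[t_0,\infty)\to[0,\infty)$ be a nondecreasing, nonnegative, differentiable function that is not identically zero, where $t_0>1$ is fixed. Let $0\le\delta<\tfrac45$. If there are constants $C_3,C_4>0$ such that $$y(t)\le C_3t^{\delta}y'(t)+C_4t^{\frac{5\delta-1}{2}}[y'(t)]^{\frac32}\quad\text{for all }t\ge t_0,$$ then $$\liminf_{t\to+\infty}t^{5\delta-4}y(t)>0.$$ *)

theory Defs
  imports "HOL-Analysis.Analysis"
begin

end

theory Submission
  imports Defs
begin

(* Put b = 4 - 5\<delta> > 0 and v t = t powr (-b) * y t.  If y' t \<le> b y t / t, the hypothesis gives
   y \<le> y (b C3 t powr (\<delta> - 1) + C4 b powr (3/2) sqrt v); the first summand tends to 0, so for large t
   and small v the bracket is below 1, which is impossible for y > 0.  Hence y' > b y / t, i.e.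
   v' = t powr (-b) (y' - b y / t) > 0, wherever v is small.  So after a time T at which y > 0 the
   function v never drops below min \<epsilon> (v T) > 0. *)

lemma barrier_lower_bound:
  fixes v v' :: "real \<Rightarrow> real"
  assumes deriv: "\<And>x. x \<ge> T \<Longrightarrow> (v has_real_derivative v' x) (at x)"
    and rising: "\<And>x. x > T \<Longrightarrow> v x < \<epsilon> \<Longrightarrow> v' x > 0"
    and "T \<le> s"
  shows "min \<epsilon> (v T) \<le> v s"
proof -
  have "continuous_on {T..s} v"
    by (rule DERIV_continuous_on[where D = v']) (auto intro: has_field_derivative_at_within deriv)
  then obtain c where c: "c \<in> {T..s}" and c_min: "\<And>x. x \<in> {T..s} \<Longrightarrow> v c \<le> v x"
    using continuous_attains_inf[of "{T..s}" v] \<open>T \<le> s\<close> by auto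
  show ?thesis
  proof (rule ccontr)
    assume "\<not> min \<epsilon> (v T) \<le> v s"
    then have small: "v c < \<epsilon>" "v c < v T"
      using c_min[of s] \<open>T \<le> s\<close> by auto
    then have "c > T" using c by (cases "c = T") auto
    then have "(v has_real_derivative v' c) (at c)" and "v' c > 0"
      using deriv rising small by auto
    then obtain d where "d > 0" and left: "\<And>h. 0 < h \<Longrightarrow> h < d \<Longrightarrow> v (c - h) < v c"
      using DERIV_pos_inc_left by blast
    define h where "h = min d (c - T) / 2"
    have "0 < h" "h < d" "c - h \<in> {T..s}"
      using \<open>d > 0\<close> \<open>c > T\<close> c by (auto simp: h_def min_def field_simps)
    then show False using left c_min by fastforce
  qed
qed

lemma slow_growth_rhs_bound:
  fixes t Y u b \<delta> C3 C4 :: real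
  assumes "t > 0" "Y \<ge> 0" "b \<ge> 0" "C3 \<ge> 0" "C4 \<ge> 0" "0 \<le> u" "u \<le> b * Y / t"
    and b: "b = 4 - 5*\<delta>"
  shows "C3 * t powr \<delta> * u + C4 * t powr ((5*\<delta> - 1)/2) * u powr (3/2)
    \<le> Y * (b * C3 * t powr (\<delta> - 1) + C4 * b powr (3/2) * sqrt (t powr (-b) * Y))"
proof -
  have power_split: "(b * Y / t) powr (3/2) = b powr (3/2) * (Y * sqrt Y) / t powr (3/2)"
  proof -
    have "Y powr (3/2) = Y * sqrt Y"
      using powr_add[of Y 1 "1/2"] \<open>Y \<ge> 0\<close> by (simp add: powr_half_sqrt)
    then show ?thesis using assms by (simp add: powr_mult powr_divide)
  qed
  have exponent_split: "t powr ((5*\<delta> - 1)/2) / t powr (3/2) = sqrt (t powr (-b))"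
  proof -
    have exponent: "(5*\<delta> - 1)/2 - 3/2 = -b * (1/2)" using b by (simp add: field_simps)
    have "t powr ((5*\<delta> - 1)/2) / t powr (3/2) = t powr ((5*\<delta> - 1)/2 - 3/2)"
      by (simp add: powr_diff)
    also have "\<dots> = (t powr (-b)) powr (1/2)"
      unfolding exponent by (simp add: powr_powr)
    finally show ?thesis
      using \<open>t > 0\<close> by (simp add: powr_half_sqrt)
  qed
  have "C3 * t powr \<delta> * u \<le> C3 * t powr \<delta> * (b * Y / t)"
    using assms by (intro mult_left_mono) auto
  also have "\<dots> = Y * (b * C3 * t powr (\<delta> - 1))"
    using \<open>t > 0\<close> by (simp add: powr_diff field_simps)
  finally have linear_term: "C3 * t powr \<delta> * u \<le> Y * (b * C3 * t powr (\<delta> - 1))" .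
  have "C4 * t powr ((5*\<delta> - 1)/2) * u powr (3/2)
      \<le> C4 * t powr ((5*\<delta> - 1)/2) * (b * Y / t) powr (3/2)"
    using assms by (intro mult_left_mono powr_mono2) auto
  also have "\<dots> = C4 * b powr (3/2) * (Y * sqrt Y) * (t powr ((5*\<delta> - 1)/2) / t powr (3/2))"
    unfolding power_split by simp
  also have "\<dots> = Y * (C4 * b powr (3/2) * sqrt (t powr (-b) * Y))"
    unfolding exponent_split by (simp add: real_sqrt_mult ac_simps)
  finally show ?thesis using linear_term by (simp add: distrib_left)
qed

lemma fast_growth_where_ratio_small:
  fixes \<delta> C3 C4 :: real
  assumes "\<delta> < 4/5" and "C3 \<ge> 0" and "C4 > 0"
  obtains \<epsilon> T0 where "\<epsilon> > 0"
    and "\<And>t Y u. T0 \<le> t \<Longrightarrow> 0 < t \<Longrightarrow> 0 < Y \<Longrightarrow> 0 \<le> u \<Longrightarrow>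
      Y \<le> C3 * t powr \<delta> * u + C4 * t powr ((5*\<delta> - 1)/2) * u powr (3/2) \<Longrightarrow>
      t powr (5*\<delta> - 4) * Y < \<epsilon> \<Longrightarrow> (4 - 5*\<delta>) * Y / t < u"
proof -
  define b where "b = 4 - 5*\<delta>"
  have "b > 0" using \<open>\<delta> < 4/5\<close> by (simp add: b_def)
  define \<epsilon> where "\<epsilon> = (1 / (2 * C4 * b powr (3/2)))^2"
  have "\<epsilon> > 0" and sqrt_\<epsilon>: "C4 * b powr (3/2) * sqrt \<epsilon> = 1/2"
    using \<open>b > 0\<close> \<open>C4 > 0\<close> by (simp_all add: \<epsilon>_def real_sqrt_divide)
  have "((\<lambda>t. b * C3 * t powr (\<delta> - 1)) \<longlongrightarrow> b * C3 * 0) at_top"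
    using \<open>\<delta> < 4/5\<close> by (intro tendsto_mult tendsto_const tendsto_neg_powr filterlim_ident) auto
  then have "eventually (\<lambda>t. b * C3 * t powr (\<delta> - 1) < 1/2) at_top"
    by (rule order_tendstoD) simp
  then obtain T0 where T0: "\<And>t. t \<ge> T0 \<Longrightarrow> b * C3 * t powr (\<delta> - 1) < 1/2"
    unfolding eventually_at_top_linorder by blast
  show ?thesis
  proof (rule that[OF \<open>\<epsilon> > 0\<close>])
    fix t Y u :: real
    assume "T0 \<le> t" "0 < t" "0 < Y" "0 \<le> u"
      and ineq: "Y \<le> C3 * t powr \<delta> * u + C4 * t powr ((5*\<delta> - 1)/2) * u powr (3/2)"
      and "t powr (5*\<delta> - 4) * Y < \<epsilon>"
    show "(4 - 5*\<delta>) * Y / t < u"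
    proof (rule ccontr)
      assume "\<not> (4 - 5*\<delta>) * Y / t < u"
      have "C4 * b powr (3/2) * sqrt (t powr (-b) * Y) \<le> C4 * b powr (3/2) * sqrt \<epsilon>"
        using \<open>t powr (5*\<delta> - 4) * Y < \<epsilon>\<close> \<open>C4 > 0\<close> by (intro mult_left_mono) (auto simp: b_def)
      then have "b * C3 * t powr (\<delta> - 1) + C4 * b powr (3/2) * sqrt (t powr (-b) * Y) < 1"
        using T0[OF \<open>T0 \<le> t\<close>] sqrt_\<epsilon> by linarith
      moreover have "Y \<le> Y * (b * C3 * t powr (\<delta> - 1) + C4 * b powr (3/2) * sqrt (t powr (-b) * Y))"
        using ineq
      proof (rule order_trans)
        show "C3 * t powr \<delta> * u + C4 * t powr ((5*\<delta> - 1)/2) * u powr (3/2)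
            \<le> Y * (b * C3 * t powr (\<delta> - 1) + C4 * b powr (3/2) * sqrt (t powr (-b) * Y))"
          by (rule slow_growth_rhs_bound)
            (use assms \<open>0 < t\<close> \<open>0 < Y\<close> \<open>0 \<le> u\<close> \<open>b > 0\<close> \<open>\<not> (4 - 5*\<delta>) * Y / t < u\<close>
              in \<open>auto simp: b_def\<close>)
      qed
      ultimately show False
        using \<open>0 < Y\<close> by (simp add: mult_le_cancel_left1)
    qed
  qed
qed

lemma has_real_derivative_powr_mult:
  fixes y :: "real \<Rightarrow> real"
  assumes "x > 0" and "(y has_real_derivative Y') (at x)"
  shows "((\<lambda>t. t powr a * y t) has_real_derivative x powr a * (Y' + a * y x / x)) (at x)"
proof -
  from DERIV_mult[OF has_real_derivative_powr[OF \<open>x > 0\<close>, of a] assms(2)]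
  show ?thesis using \<open>x > 0\<close> by (simp add: powr_diff field_simps)
qed

theorem lemma2p2:
  fixes y y' :: "real \<Rightarrow> real" and t0 \<delta> C3 C4 :: real
  assumes "t0 > 1"
    and deriv: "\<And>t. t \<ge> t0 \<Longrightarrow> (y has_real_derivative y' t) (at t within {t0..})"
    and mono: "mono_on {t0..} y"
    and nonneg: "\<And>t. t \<ge> t0 \<Longrightarrow> y t \<ge> 0"
    and nonzero: "\<exists>t\<ge>t0. y t \<noteq> 0"
    and "0 \<le> \<delta>" and "\<delta> < 4/5"
    and "C3 > 0" and "C4 > 0"
    and ineq: "\<And>t. t \<ge> t0 \<Longrightarrow>
        y t \<le> C3 * t powr \<delta> * y' t + C4 * t powr ((5*\<delta> - 1)/2) * (y' t) powr (3/2)"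
  shows "Liminf at_top (\<lambda>t. ereal (t powr (5*\<delta> - 4) * y t)) > 0"
proof -
  define b where "b = 4 - 5*\<delta>"
  define v where "v t = t powr (-b) * y t" for t
  define v' where "v' t = t powr (-b) * (y' t - b * y t / t)" for t
  have y_deriv: "(y has_real_derivative y' t) (at t)" if "t > t0" for t
    using deriv[of t] that at_within_interior[of t "{t0..}"] by simp
  have y'_nonneg: "y' t \<ge> 0" if "t > t0" for t
    using mono_on_imp_deriv_nonneg[OF mono y_deriv[OF that]] that by simp
  obtain t1 where "t1 \<ge> t0" "y t1 \<noteq> 0" using nonzero by blast
  have y_pos: "y t > 0" if "t \<ge> t1" for t
    using nonneg[of t1] mono_onD[OF mono, of t1 t] \<open>t1 \<ge> t0\<close> \<open>y t1 \<noteq> 0\<close> that by force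
  obtain \<epsilon> T0 where "\<epsilon> > 0" and fast: "\<And>t Y u. T0 \<le> t \<Longrightarrow> 0 < t \<Longrightarrow> 0 < Y \<Longrightarrow> 0 \<le> u \<Longrightarrow>
      Y \<le> C3 * t powr \<delta> * u + C4 * t powr ((5*\<delta> - 1)/2) * u powr (3/2) \<Longrightarrow>
      t powr (5*\<delta> - 4) * Y < \<epsilon> \<Longrightarrow> (4 - 5*\<delta>) * Y / t < u"
    using fast_growth_where_ratio_small[of \<delta> C3 C4] \<open>\<delta> < 4/5\<close> \<open>C3 > 0\<close> \<open>C4 > 0\<close> by auto
  define T where "T = max (max t1 (t0 + 1)) T0"
  have v_deriv: "(v has_real_derivative v' t) (at t)" if "t \<ge> T" for t
    using has_real_derivative_powr_mult[OF _ y_deriv, of t "-b"] that \<open>t0 > 1\<close>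
    unfolding v_def v'_def by (simp add: T_def)
  have v'_pos: "v' t > 0" if "t > T" "v t < \<epsilon>" for t
    using fast[of t "y t" "y' t"] that ineq[of t] y'_nonneg[of t] y_pos[of t] \<open>t0 > 1\<close>
    by (simp add: T_def v_def v'_def b_def)
  have "0 < ereal (min \<epsilon> (v T))"
    using \<open>\<epsilon> > 0\<close> y_pos[of T] \<open>t0 > 1\<close> by (simp add: v_def T_def)
  also have "\<dots> \<le> Liminf at_top (\<lambda>t. ereal (v t))"
    using barrier_lower_bound[OF v_deriv v'_pos]
    by (intro Liminf_bounded eventually_at_top_linorderI[of T] ereal_less_eq(3)[THEN iffD2])
  also have "(\<lambda>t. ereal (v t)) = (\<lambda>t. ereal (t powr (5*\<delta> - 4) * y t))"
    by (simp add: v_def b_def)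
  finally show ?thesis .
qed

end
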